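(* Let $U\colon\mathbb R\to\mathbb R$ be given by $U(x)=-e^{-x}$ for $x\ge0$ and $U(x)=x-1$ for $x<0$. For $\gamma>0$ and a real random variable $X$ let $\mu_\gamma(X):=-\tfrac1\gamma U^{-1}(\mathbb E[U(\gamma X)])$ and $\alpha(X):=\sup\{\gamma>0:\mu_\gamma(X)\le0\}$ (with $\sup\emptyset:=0$). Let $\lambda\in\mathbb R$, $m>\lambda$, let $(r_t)_{t\in\mathbb N}$ be i.i.d. $N(m,1)$ and $S_T:=\sum_{t=1}^T(r_t-\lambda)$. Then for every $\gamma>0$, $\mathbb E[U(\gamma S_T)]\to0$ as $T\to\infty$; consequently $\liminf_{T\to\infty}\alpha(S_T)=\infty$.
   Context: $U$ is concave, strictly increasing, bounded above by $0$ with $\lim_{x\to\infty}U(x)=0$ and $U(0)=-1$; $U^{-1}$ denotes its inverse on its range $(-\infty,0)$. *)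

theory Defs
  imports "HOL-Probability.Probability"
begin

definition U :: "real \<Rightarrow> real" where
  "U x = (if 0 \<le> x then - exp (- x) else x - 1)"

text \<open>Inverse of U on its range (-infinity, 0).\<close>
definition Uinv :: "real \<Rightarrow> real" where
  "Uinv y = the_inv_into UNIV U y"

definition mu :: "'a measure \<Rightarrow> real \<Rightarrow> ('a \<Rightarrow> real) \<Rightarrow> real" where
  "mu M \<gamma> X = - (1 / \<gamma>) * Uinv (prob_space.expectation M (\<lambda>\<omega>. U (\<gamma> * X \<omega>)))"

definition alpha :: "'a measure \<Rightarrow> ('a \<Rightarrow> real) \<Rightarrow> ereal" where
  "alpha M X = (if {\<gamma>. 0 < \<gamma> \<and> mu M \<gamma> X \<le> 0} = {} then 0
                else Sup (ereal ` {\<gamma>. 0 < \<gamma> \<and> mu M \<gamma> X \<le> 0}))"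

end

theory Submission imports Defs begin

text \<open>
  Since \<open>U\<close> is squeezed between \<open>0\<close> and a multiple of \<open>exp (- c x)\<close> for every \<open>0 < c \<le> 1\<close>,
  \<open>\<bar>E U(\<gamma> S\<^sub>T)\<bar>\<close> is controlled by the exponential moment \<open>E exp (- s S\<^sub>T)\<close> with
  \<open>s = min \<gamma> (m - \<lambda>)\<close>. For the Gaussian random walk this moment is
  \<open>exp (s\<^sup>2/2 - s (m - \<lambda>))\<^sup>T\<close>, which decays geometrically, so \<open>E U(\<gamma> S\<^sub>T) \<rightarrow> 0\<close>.
  Once \<open>E U(\<gamma> S\<^sub>T) \<ge> -1 = U 0\<close> we get \<open>U\<^sup>-\<^sup>1(E U(\<gamma> S\<^sub>T)) \<ge> 0\<close>, i.e. \<open>\<mu>\<^sub>\<gamma>(S\<^sub>T) \<le> 0\<close> and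
  \<open>\<alpha>(S\<^sub>T) \<ge> \<gamma>\<close>; as \<open>\<gamma>\<close> is arbitrary, \<open>\<alpha>(S\<^sub>T) \<rightarrow> \<infinity>\<close>.
\<close>

lemma U_less_0: "U x < 0"
  by (auto simp: U_def)

lemma U_borel_measurable[measurable]: "U \<in> borel_measurable borel"
  unfolding U_def[abs_def] by measurable

lemma strict_mono_U: "strict_mono U"
proof (rule strict_monoI)
  fix x y :: real assume "x < y"
  show "U x < U y"
  proof (cases "0 \<le> x")
    case False
    have "x - 1 < U y"
    proof (cases "0 \<le> y")
      case True
      have "x - 1 < -1" using False by simp
      also have "-1 \<le> - exp (- y)" using True by simp
      finally show ?thesis using True by (simp add: U_def)
    qed (use \<open>x < y\<close> in \<open>simp add: U_def\<close>)
    then show ?thesis using False by (simp add: U_def)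
  qed (use \<open>x < y\<close> in \<open>simp add: U_def\<close>)
qed

lemma Uinv_nonneg:
  assumes "-1 \<le> y" "y < 0"
  shows "0 \<le> Uinv y"
proof -
  have "0 \<le> - ln (- y)" and "U (- ln (- y)) = y"
    using assms by (simp_all add: U_def)
  then show ?thesis
    unfolding Uinv_def using the_inv_into_f_f[OF strict_mono_imp_inj_on[OF strict_mono_U]]
    by (metis UNIV_I)
qed

lemma abs_U_le_exp:
  assumes "0 < c" "c \<le> 1"
  shows "\<bar>U x\<bar> \<le> exp (- c * x) / c"
proof (cases "0 \<le> x")
  case True
  have "exp (- x) \<le> exp (- c * x)" using True assms by (simp add: mult_left_le_one_le)
  also have "\<dots> \<le> exp (- c * x) / c" using assms by (simp add: le_divide_eq mult_left_le_one_le)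
  finally show ?thesis using True by (simp add: U_def)
next
  case False
  have "c * (1 - x) \<le> 1 + (- c * x)" using assms by (simp add: algebra_simps)
  also have "\<dots> \<le> exp (- c * x)" by (rule exp_ge_add_one_self)
  finally show ?thesis using False assms by (simp add: U_def le_divide_eq mult.commute)
qed

lemma normal_density_mult_exp:
  assumes "\<sigma> \<noteq> 0"
  shows "normal_density \<mu> \<sigma> x * exp (s * x)
    = exp (s * \<mu> + s\<^sup>2 * \<sigma>\<^sup>2 / 2) * normal_density (\<mu> + s * \<sigma>\<^sup>2) \<sigma> x"
proof -
  have "-(x - \<mu>)\<^sup>2 / (2 * \<sigma>\<^sup>2) + s * x = (s * \<mu> + s\<^sup>2 * \<sigma>\<^sup>2 / 2) + -(x - (\<mu> + s * \<sigma>\<^sup>2))\<^sup>2 / (2 * \<sigma>\<^sup>2)"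
    using assms by (simp add: power2_eq_square field_simps)
  then show ?thesis
    unfolding normal_density_def by (simp add: exp_add[symmetric] mult_ac)
qed

context prob_space
begin

lemma normal_exp_moment:
  assumes X: "distributed M lborel X (normal_density \<mu> \<sigma>)" and "0 < \<sigma>"
  shows "integrable M (\<lambda>\<omega>. exp (s * X \<omega>))"
    and "expectation (\<lambda>\<omega>. exp (s * X \<omega>)) = exp (s * \<mu> + s\<^sup>2 * \<sigma>\<^sup>2 / 2)"
proof -
  have density: "normal_density \<mu> \<sigma> x * exp (s * x)
      = exp (s * \<mu> + s\<^sup>2 * \<sigma>\<^sup>2 / 2) * normal_density (\<mu> + s * \<sigma>\<^sup>2) \<sigma> x" for x
    using normal_density_mult_exp \<open>0 < \<sigma>\<close> by simp
  show "integrable M (\<lambda>\<omega>. exp (s * X \<omega>))"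
    using distributed_integrable[OF X, of "\<lambda>x. exp (s * x)"] \<open>0 < \<sigma>\<close> by (simp add: density)
  show "expectation (\<lambda>\<omega>. exp (s * X \<omega>)) = exp (s * \<mu> + s\<^sup>2 * \<sigma>\<^sup>2 / 2)"
    using distributed_integral[OF X, of "\<lambda>x. exp (s * x)"] \<open>0 < \<sigma>\<close> by (simp add: density)
qed

lemma normal_random_walk_exp_moment:
  fixes lam :: real
  assumes indep: "indep_vars (\<lambda>_. borel) r UNIV"
    and normal: "\<And>t. distributed M lborel (r t) (normal_density \<mu> \<sigma>)" and "0 < \<sigma>"
  defines "S \<equiv> \<lambda>T \<omega>. \<Sum>t\<in>{1..T}. (r t \<omega> - lam)"
  shows "integrable M (\<lambda>\<omega>. exp (s * S T \<omega>))"
    and "expectation (\<lambda>\<omega>. exp (s * S T \<omega>)) = exp (s * (\<mu> - lam) + s\<^sup>2 * \<sigma>\<^sup>2 / 2) ^ T"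
proof -
  define Y where "Y t \<omega> = exp (s * (r t \<omega> - lam))" for t \<omega>
  have S_prod: "exp (s * S T \<omega>) = (\<Prod>t\<in>{1..T}. Y t \<omega>)" for \<omega>
    by (simp add: S_def Y_def exp_sum[symmetric] sum_distrib_left right_diff_distrib)
  have Y_indep: "indep_vars (\<lambda>_. borel) Y {1..T}"
    unfolding Y_def
    by (rule indep_vars_subset[OF indep_vars_compose2[OF indep, where Y="\<lambda>t x. exp (s * (x - lam))"]])
      auto
  have Y_eq: "Y t \<omega> = exp (- s * lam) * exp (s * r t \<omega>)" for t \<omega>
    by (simp add: Y_def exp_add[symmetric] algebra_simps)
  have Y_integrable: "integrable M (Y t)" for t
    unfolding Y_eq[abs_def] using normal_exp_moment(1)[OF normal \<open>0 < \<sigma>\<close>] by simp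
  have Y_expectation: "expectation (Y t) = exp (s * (\<mu> - lam) + s\<^sup>2 * \<sigma>\<^sup>2 / 2)" for t
  proof -
    have "expectation (Y t) = exp (- s * lam) * expectation (\<lambda>\<omega>. exp (s * r t \<omega>))"
      unfolding Y_eq by simp
    then show ?thesis
      using normal_exp_moment(2)[OF normal \<open>0 < \<sigma>\<close>] by (simp add: exp_add[symmetric] algebra_simps)
  qed
  show "integrable M (\<lambda>\<omega>. exp (s * S T \<omega>))"
    unfolding S_prod using indep_vars_integrable[OF _ Y_indep] Y_integrable by simp
  show "expectation (\<lambda>\<omega>. exp (s * S T \<omega>)) = exp (s * (\<mu> - lam) + s\<^sup>2 * \<sigma>\<^sup>2 / 2) ^ T"
    unfolding S_prod using indep_vars_lebesgue_integral[OF _ Y_indep] Y_integrable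
    by (simp add: Y_expectation)
qed

lemma expectation_U_less_0:
  assumes "integrable M (\<lambda>\<omega>. U (X \<omega>))"
  shows "expectation (\<lambda>\<omega>. U (X \<omega>)) < 0"
  using integral_less_AE_space[OF assms, of "\<lambda>_. 0"] U_less_0 emeasure_space_1 by simp

lemma ereal_le_alpha:
  assumes "0 < \<gamma>" "-1 \<le> expectation (\<lambda>\<omega>. U (\<gamma> * X \<omega>))" "expectation (\<lambda>\<omega>. U (\<gamma> * X \<omega>)) < 0"
  shows "ereal \<gamma> \<le> alpha M X"
proof -
  have "mu M \<gamma> X \<le> 0"
    using Uinv_nonneg[OF assms(2,3)] \<open>0 < \<gamma>\<close> by (simp add: mu_def)
  then have "\<gamma> \<in> {\<gamma>. 0 < \<gamma> \<and> mu M \<gamma> X \<le> 0}"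
    using \<open>0 < \<gamma>\<close> by simp
  then show ?thesis
    unfolding alpha_def by (auto intro: Sup_upper)
qed

lemma expectation_U_bound:
  assumes "X \<in> borel_measurable M" "integrable M (\<lambda>\<omega>. exp (- s * X \<omega>))" "0 < s" "s \<le> \<gamma>"
  shows "integrable M (\<lambda>\<omega>. U (\<gamma> * X \<omega>))"
    and "\<bar>expectation (\<lambda>\<omega>. U (\<gamma> * X \<omega>))\<bar> \<le> \<gamma> / s * expectation (\<lambda>\<omega>. exp (- s * X \<omega>))"
proof -
  have bound: "\<bar>U (\<gamma> * X \<omega>)\<bar> \<le> \<gamma> / s * exp (- s * X \<omega>)" for \<omega>
  proof -
    have "exp (- (s / \<gamma>) * (\<gamma> * X \<omega>)) / (s / \<gamma>) = \<gamma> / s * exp (- s * X \<omega>)"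
      using assms(3,4) by simp
    then show ?thesis
      using abs_U_le_exp[of "s / \<gamma>" "\<gamma> * X \<omega>"] assms(3,4) by (simp add: mult_ac)
  qed
  show int: "integrable M (\<lambda>\<omega>. U (\<gamma> * X \<omega>))"
    by (rule Bochner_Integration.integrable_bound[where f="\<lambda>\<omega>. \<gamma> / s * exp (- s * X \<omega>)"])
      (use assms bound in auto)
  have "\<bar>expectation (\<lambda>\<omega>. U (\<gamma> * X \<omega>))\<bar> \<le> expectation (\<lambda>\<omega>. \<bar>U (\<gamma> * X \<omega>)\<bar>)"
    by (rule integral_abs_bound)
  also have "\<dots> \<le> expectation (\<lambda>\<omega>. \<gamma> / s * exp (- s * X \<omega>))"
    by (rule integral_mono) (use int assms bound in auto)
  finally show "\<bar>expectation (\<lambda>\<omega>. U (\<gamma> * X \<omega>))\<bar> \<le> \<gamma> / s * expectation (\<lambda>\<omega>. exp (- s * X \<omega>))"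
    by simp
qed

lemma tendsto_expectation_U_zero:
  assumes "\<And>T. S T \<in> borel_measurable M" "\<And>T. integrable M (\<lambda>\<omega>. exp (- s * S T \<omega>))"
    and "0 < s" "s \<le> \<gamma>"
    and "((\<lambda>T. expectation (\<lambda>\<omega>. exp (- s * S T \<omega>))) \<longlongrightarrow> 0) F"
  shows "((\<lambda>T. expectation (\<lambda>\<omega>. U (\<gamma> * S T \<omega>))) \<longlongrightarrow> 0) F"
proof (rule Lim_null_comparison)
  show "\<forall>\<^sub>F T in F. norm (expectation (\<lambda>\<omega>. U (\<gamma> * S T \<omega>)))
      \<le> \<gamma> / s * expectation (\<lambda>\<omega>. exp (- s * S T \<omega>))"
    using expectation_U_bound(2)[OF assms(1-4)] by (simp add: always_eventually)
  show "((\<lambda>T. \<gamma> / s * expectation (\<lambda>\<omega>. exp (- s * S T \<omega>))) \<longlongrightarrow> 0) F"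
    using tendsto_mult_right_zero[OF assms(5)] .
qed

lemma liminf_alpha_eq_infinity:
  assumes "\<And>\<gamma> T. 0 < \<gamma> \<Longrightarrow> integrable M (\<lambda>\<omega>. U (\<gamma> * S T \<omega>))"
    and "\<And>\<gamma>. 0 < \<gamma> \<Longrightarrow> (\<lambda>T. expectation (\<lambda>\<omega>. U (\<gamma> * S T \<omega>))) \<longlonglongrightarrow> 0"
  shows "liminf (\<lambda>T. alpha M (S T)) = \<infinity>"
  unfolding liminf_PInfty[symmetric] tendsto_PInfty
proof
  fix R :: real
  define \<gamma> where "\<gamma> = max 1 (R + 1)"
  have "0 < \<gamma>" "R < \<gamma>" by (auto simp: \<gamma>_def)
  have "\<forall>\<^sub>F T in sequentially. -1 < expectation (\<lambda>\<omega>. U (\<gamma> * S T \<omega>))"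
    using assms(2)[OF \<open>0 < \<gamma>\<close>] by (rule order_tendstoD) simp
  then show "\<forall>\<^sub>F T in sequentially. ereal R < alpha M (S T)"
  proof eventually_elim
    case (elim T)
    have "ereal R < ereal \<gamma>"
      using \<open>R < \<gamma>\<close> by simp
    also have "ereal \<gamma> \<le> alpha M (S T)"
      using ereal_le_alpha[OF \<open>0 < \<gamma>\<close>] elim expectation_U_less_0[OF assms(1)[OF \<open>0 < \<gamma>\<close>]] by simp
    finally show ?case .
  qed
qed

end

theorem mainTheorem7:
  fixes M :: "'a measure" and r :: "nat \<Rightarrow> 'a \<Rightarrow> real" and lam m :: real
  assumes "prob_space M"
    and "m > lam"
    and "prob_space.indep_vars M (\<lambda>_. borel) r UNIV"
    and "\<And>t. distributed M lborel (r t) (normal_density m 1)"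
  defines "S \<equiv> (\<lambda>T \<omega>. \<Sum>t\<in>{1..T}. (r t \<omega> - lam))"
  shows "(\<forall>\<gamma>>0. (\<lambda>T. prob_space.expectation M (\<lambda>\<omega>. U (\<gamma> * S T \<omega>))) \<longlonglongrightarrow> 0)
         \<and> liminf (\<lambda>T. alpha M (S T)) = \<infinity>"
proof -
  interpret prob_space M by fact
  define d where "d = m - lam"
  have "0 < d" using \<open>m > lam\<close> by (simp add: d_def)
  have [measurable]: "r t \<in> borel_measurable M" for t
    using assms(3) unfolding indep_vars_def2 by simp
  have S_measurable: "S T \<in> borel_measurable M" for T
    unfolding S_def by measurable
  have exp_moment: "integrable M (\<lambda>\<omega>. exp (- s * S T \<omega>))"
    "expectation (\<lambda>\<omega>. exp (- s * S T \<omega>)) = exp (s * (s / 2 - d)) ^ T" for s T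
    using normal_random_walk_exp_moment[OF assms(3,4), of "- s" lam T]
    by (simp_all add: S_def d_def power2_eq_square algebra_simps)
  have EU_integrable: "integrable M (\<lambda>\<omega>. U (\<gamma> * S T \<omega>))"
    and EU_tendsto: "(\<lambda>T. expectation (\<lambda>\<omega>. U (\<gamma> * S T \<omega>))) \<longlonglongrightarrow> 0" if "0 < \<gamma>" for \<gamma> T
  proof -
    define s where "s = min \<gamma> d"
    have "0 < s" "s \<le> \<gamma>" "s \<le> d" using \<open>0 < \<gamma>\<close> \<open>0 < d\<close> by (auto simp: s_def)
    then have "exp (s * (s / 2 - d)) < 1" by (simp add: mult_pos_neg)
    then have "(\<lambda>T. expectation (\<lambda>\<omega>. exp (- s * S T \<omega>))) \<longlonglongrightarrow> 0"
      unfolding exp_moment(2) by (intro LIMSEQ_power_zero) simp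
    then show "(\<lambda>T. expectation (\<lambda>\<omega>. U (\<gamma> * S T \<omega>))) \<longlonglongrightarrow> 0"
      by (rule tendsto_expectation_U_zero[OF S_measurable exp_moment(1) \<open>0 < s\<close> \<open>s \<le> \<gamma>\<close>])
    show "integrable M (\<lambda>\<omega>. U (\<gamma> * S T \<omega>))"
      by (rule expectation_U_bound(1)[OF S_measurable exp_moment(1) \<open>0 < s\<close> \<open>s \<le> \<gamma>\<close>])
  qed
  show ?thesis
    using EU_tendsto liminf_alpha_eq_infinity[OF EU_integrable EU_tendsto] by blast
qed

end
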